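(* Let $q\in\mathbb{C}[x_0,\dots,x_3]_2$ be a quadratic form of rank four. There are no nonsingular (i.e. reduced, consisting of ten distinct points) subschemes of $\mathbb{P}^3$ of length ten apolar to $q^2$.
   Context: $T=\mathbb{C}[y_0,\dots,y_3]$ acts on $S=\mathbb{C}[x_0,\dots,x_3]$ by differentiation; $\mathbb{P}^3=\mathbb{P}(S_1)$ has coordinate ring $T$, and a subscheme $\Gamma$ is apolar to $f$ if every element of its ideal $I_\Gamma\subset T$ annihilates $f$. *)

theory Defs
  imports "HOL-Analysis.Analysis"
begin

text \<open>Polynomials in four variables over the complex numbers, represented by
their coefficient functions on exponent vectors (monomials) indexed by the
type 4 (variables 0..3). The same representation serves for
S = C[x_0..x_3] and for T = C[y_0..y_3].\<close>

type_synonym mon = "4 \<Rightarrow> nat"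
type_synonym poly4 = "mon \<Rightarrow> complex"

definition is_poly :: "poly4 \<Rightarrow> bool" where
  "is_poly p \<longleftrightarrow> finite {a. p a \<noteq> 0}"

definition mdeg :: "mon \<Rightarrow> nat" where
  "mdeg a = (\<Sum>i\<in>UNIV. a i)"

definition homog :: "nat \<Rightarrow> poly4 \<Rightarrow> bool" where
  "homog d p \<longleftrightarrow> (\<forall>a. p a \<noteq> 0 \<longrightarrow> mdeg a = d)"

definition hcomp :: "nat \<Rightarrow> poly4 \<Rightarrow> poly4" where
  "hcomp d p = (\<lambda>a. if mdeg a = d then p a else 0)"

definition peval :: "poly4 \<Rightarrow> complex^4 \<Rightarrow> complex" where
  "peval p v = (\<Sum>a\<in>{a. p a \<noteq> 0}. p a * (\<Prod>i\<in>UNIV. (v $ i) ^ (a i)))"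

definition pmult :: "poly4 \<Rightarrow> poly4 \<Rightarrow> poly4" where
  "pmult p r = (\<lambda>c. \<Sum>(a,b)\<in>{(a,b). p a \<noteq> 0 \<and> r b \<noteq> 0 \<and> (\<lambda>i. a i + b i) = c}. p a * r b)"

text \<open>Apolarity action of T on S by differentiation:
  y^a acting on x^(a+c) gives (prod_i (a_i+c_i)!/c_i!) x^c.\<close>
definition papply :: "poly4 \<Rightarrow> poly4 \<Rightarrow> poly4" where
  "papply g f = (\<lambda>c. \<Sum>a\<in>{a. g a \<noteq> 0}.
      g a * f (\<lambda>i. a i + c i) *
      (\<Prod>i\<in>UNIV. of_nat (fact (a i + c i)) / of_nat (fact (c i))))"

text \<open>Symmetric matrix of a quadratic form: q(x) = x^T M x.\<close>
definition qmat :: "poly4 \<Rightarrow> complex^4^4" where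
  "qmat q = (\<chi> i j. q (\<lambda>k. (if k = i then 1 else 0) + (if k = j then 1 else 0))
                       / (if i = j then 1 else 2))"

text \<open>A finite set of points of P^3 given by nonzero representatives in C^4,
pairwise non-proportional (so distinct points). Its (saturated, homogeneous)
ideal I_Gamma in T consists of the polynomials all of whose homogeneous
components vanish at every point.\<close>
definition proj_points :: "(complex^4) set \<Rightarrow> bool" where
  "proj_points G \<longleftrightarrow> (\<forall>v\<in>G. v \<noteq> 0) \<and>
     (\<forall>u\<in>G. \<forall>v\<in>G. u \<noteq> v \<longrightarrow> \<not> (\<exists>c. v = c *s u))"

definition ideal_of_points :: "(complex^4) set \<Rightarrow> poly4 set" where
  "ideal_of_points G = {g. is_poly g \<and> (\<forall>d. \<forall>v\<in>G. peval (hcomp d g) v = 0)}"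

definition apolar :: "(complex^4) set \<Rightarrow> poly4 \<Rightarrow> bool" where
  "apolar G f \<longleftrightarrow> (\<forall>g\<in>ideal_of_points G. papply g f = (\<lambda>_. 0))"

end

theory Submission
  imports Defs "HOL-Library.Function_Algebras"
begin

text \<open>Let \<open>M\<close> be the symmetric matrix of \<open>q\<close> and \<open>N = M\<^sup>-\<^sup>1\<close>. For a quadric \<open>B\<close> in the ideal
of a set \<open>G\<close> apolar to \<open>q\<^sup>2\<close>, the apolarity pairing reads \<open>tr(BM) M + 2 MBM = 0\<close>, which forces
\<open>B = 0\<close>: \<open>G\<close> lies on no quadric. For \<open>p \<in> G\<close> let \<open>B\<close> be a quadric through the
other nine points; multiplying it by linear forms vanishing at \<open>p\<close> gives cubics in the ideal, and
the same pairing shows \<open>B = \<alpha>N + \<mu>(Np)(Np)\<^sup>T\<close> with \<open>6\<alpha> = -\<mu> N(p,p)\<close>. Evaluating \<open>B\<close> on \<open>G\<close>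
gives \<open>N(p,p) \<noteq> 0\<close> and \<open>6 N(k,p)\<^sup>2 = N(p,p) N(k,k)\<close> for \<open>k \<noteq> p\<close>. As \<open>G\<close> lies on no quadric,
\<open>N\<close> equals its interpolation \<open>\<Sum>\<^sub>j c\<^sub>j ((Nj)(Nj)\<^sup>T - N(j,j)/6 N)\<close>; evaluated at two points
\<open>k, l\<close> this leaves eight numbers \<open>\<plusminus>\<surd>6/5\<close> summing to \<open>3/5\<close>, i.e. \<open>9 = 6m\<^sup>2\<close> for an
integer \<open>m\<close>.\<close>

section \<open>Monomials and the derivative action\<close>

definition unit_mon :: "4 \<Rightarrow> mon" where
  "unit_mon s = (\<lambda>k. if k = s then 1 else 0)"

definition mon_fact :: "mon \<Rightarrow> complex" where
  "mon_fact a = (\<Prod>i\<in>UNIV. of_nat (fact (a i)))"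

definition pdiff :: "4 \<Rightarrow> poly4 \<Rightarrow> poly4" where
  "pdiff s f = (\<lambda>c. of_nat (c s + 1) * f (c + unit_mon s))"

lemma unit_mon_same [simp]: "unit_mon s s = 1"
  by (simp add: unit_mon_def)

lemma mdeg_add [simp]: "mdeg (a + b) = mdeg a + mdeg b"
  by (simp add: mdeg_def sum.distrib)

lemma mdeg_unit_mon [simp]: "mdeg (unit_mon s) = 1"
  by (simp add: mdeg_def unit_mon_def)

lemma finite_atMost_mon: "finite {..c :: 'i::finite \<Rightarrow> nat}"
proof -
  have "{..c} = PiE UNIV (\<lambda>i. {..c i})"
    by (auto simp: le_fun_def PiE_UNIV_domain Pi_iff)
  then show ?thesis by (simp add: finite_PiE)
qed

lemma atMost_mon_0: "{..0 :: 'i \<Rightarrow> nat} = {0}"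
  by (auto simp: le_fun_def fun_eq_iff)

lemma mon_diff_diff: "a \<le> c \<Longrightarrow> c - (c - a) = (a :: 'i \<Rightarrow> nat)"
  by (simp add: le_fun_def fun_eq_iff)

lemma mon_add_eq_iff: "a + b = c \<longleftrightarrow> a \<le> c \<and> b = c - (a :: 'i \<Rightarrow> nat)"
  by (auto simp: le_fun_def fun_eq_iff) (metis le_add1, metis add_diff_cancel_left')

lemma sum_atMost_mon_reflect: "(\<Sum>a\<in>{..c :: 'i \<Rightarrow> nat}. h a) = (\<Sum>a\<in>{..c}. h (c - a))"
  by (rule sum.reindex_bij_witness[where i = "\<lambda>a. c - a" and j = "\<lambda>a. c - a"])
     (auto simp: mon_diff_diff, auto simp: le_fun_def)

lemma mon_fact_0 [simp]: "mon_fact 0 = 1"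
  by (simp add: mon_fact_def)

lemma mon_fact_add_unit: "mon_fact (c + unit_mon s) = of_nat (c s + 1) * mon_fact c"
proof -
  have "mon_fact (c + unit_mon s)
      = (\<Prod>i\<in>UNIV. (if i = s then of_nat (c s + 1) else 1) * of_nat (fact (c i)))"
    unfolding mon_fact_def by (rule prod.cong) (auto simp: unit_mon_def)
  then show ?thesis
    by (simp add: prod.distrib mon_fact_def)
qed

lemma mon_fact_unit_mon: "mon_fact (unit_mon s) = 1"
  using mon_fact_add_unit[of 0 s] by simp

lemma prod_power_unit_mon: "(\<Prod>i\<in>UNIV. v $ i ^ unit_mon s i) = v $ s"
  by (simp add: unit_mon_def if_distrib prod.If_cases)

lemma pmult_eq_sum_atMost: "pmult f g c = (\<Sum>a\<in>{..c}. f a * g (c - a))"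
proof -
  have "pmult f g c = (\<Sum>(a, b)\<in>{(a, b). f a \<noteq> 0 \<and> g b \<noteq> 0 \<and> a + b = c}. f a * g b)"
    by (simp add: pmult_def plus_fun_def)
  also have "\<dots> = (\<Sum>(a, b)\<in>(\<lambda>a. (a, c - a)) ` {..c}. f a * g b)"
    by (rule sum.mono_neutral_left) (auto simp: finite_atMost_mon mon_add_eq_iff)
  also have "\<dots> = (\<Sum>a\<in>{..c}. f a * g (c - a))"
    by (subst sum.reindex) (auto simp: inj_on_def)
  finally show ?thesis .
qed

lemma pmult_commute: "pmult f g = pmult g f"
  by (rule ext) (subst (1 2) pmult_eq_sum_atMost, subst sum_atMost_mon_reflect,
     auto intro!: sum.cong simp: mon_diff_diff mult.commute)

lemma pmult_at_0: "pmult f g 0 = f 0 * g 0"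
  by (simp add: pmult_eq_sum_atMost atMost_mon_0)

lemma pdiff_add: "pdiff s (f + g) = pdiff s f + pdiff s g"
  by (simp add: pdiff_def fun_eq_iff algebra_simps)

lemma sum_atMost_weighted_eq_pmult_pdiff:
  "(\<Sum>a\<in>{..c + unit_mon s}. of_nat (a s) * f a * g (c + unit_mon s - a)) = pmult (pdiff s f) g c"
proof -
  let ?e = "unit_mon s"
  have "(\<Sum>a\<in>{..c + ?e}. of_nat (a s) * f a * g (c + ?e - a))
      = (\<Sum>a\<in>{a\<in>{..c + ?e}. a s \<noteq> 0}. of_nat (a s) * f a * g (c + ?e - a))"
    by (rule sum.mono_neutral_right) (auto simp: finite_atMost_mon)
  also have "\<dots> = (\<Sum>b\<in>{..c}. of_nat (b s + 1) * f (b + ?e) * g (c - b))"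
  proof (rule sum.reindex_bij_witness[where i = "\<lambda>b. b + ?e" and j = "\<lambda>a. a - ?e"])
    fix a assume "a \<in> {a \<in> {..c + ?e}. a s \<noteq> 0}"
    then have a: "a s \<noteq> 0" "\<And>i. a i \<le> c i + ?e i"
      by (auto simp: le_fun_def)
    show add_back: "a - ?e + ?e = a"
      using a by (auto simp: fun_eq_iff unit_mon_def)
    have diff: "c - (a - ?e) = c + ?e - a"
      using a by (auto simp: fun_eq_iff unit_mon_def)
    show "a - ?e \<in> {..c}"
      using a(2) by (simp add: le_fun_def le_diff_conv)
    show "of_nat ((a - ?e) s + 1) * f (a - ?e + ?e) * g (c - (a - ?e))
      = of_nat (a s) * f a * g (c + ?e - a)"
      using a(1) by (simp add: add_back diff)
  next
    fix b assume "b \<in> {..c}"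
    then show "b + ?e - ?e = b" "b + ?e \<in> {a \<in> {..c + ?e}. a s \<noteq> 0}"
      by (auto simp: fun_eq_iff le_fun_def unit_mon_def add_mono)
  qed
  also have "\<dots> = pmult (pdiff s f) g c"
    by (simp add: pmult_eq_sum_atMost pdiff_def mult.assoc)
  finally show ?thesis .
qed

lemma pdiff_pmult: "pdiff s (pmult f g) = pmult (pdiff s f) g + pmult f (pdiff s g)"
proof
  fix c
  let ?c = "c + unit_mon s"
  \<comment> \<open>Split the weight \<open>c\<^sub>s + 1 = a\<^sub>s + (c + e\<^sub>s - a)\<^sub>s\<close>; after reflecting \<open>a \<mapsto> c + e\<^sub>s - a\<close>
    the second half is the first one with \<open>f\<close> and \<open>g\<close> exchanged.\<close>
  have weight: "of_nat (c s + 1) = (of_nat (a s) + of_nat ((?c - a) s) :: complex)"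
    if "a \<le> ?c" for a
  proof -
    have "a s \<le> c s + 1"
      using that by (auto simp: le_fun_def unit_mon_def dest: spec[of _ s])
    then show ?thesis
      by (simp add: unit_mon_def flip: of_nat_add)
  qed
  have "pdiff s (pmult f g) c = (\<Sum>a\<in>{..?c}. of_nat (c s + 1) * f a * g (?c - a))"
    by (simp add: pdiff_def pmult_eq_sum_atMost sum_distrib_left mult.assoc)
  also have "\<dots> = (\<Sum>a\<in>{..?c}. of_nat (a s) * f a * g (?c - a)
      + of_nat ((?c - a) s) * g (?c - a) * f a)"
    by (intro sum.cong refl) (simp only: weight atMost_iff, simp add: algebra_simps)
  also have "\<dots> = (\<Sum>a\<in>{..?c}. of_nat (a s) * f a * g (?c - a))
      + (\<Sum>a\<in>{..?c}. of_nat ((?c - a) s) * g (?c - a) * f a)"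
    by (rule sum.distrib)
  also have "(\<Sum>a\<in>{..?c}. of_nat ((?c - a) s) * g (?c - a) * f a)
      = (\<Sum>a\<in>{..?c}. of_nat (a s) * g a * f (?c - a))"
    by (subst sum_atMost_mon_reflect) (auto intro!: sum.cong simp: mon_diff_diff)
  finally have "pdiff s (pmult f g) c = pmult (pdiff s f) g c + pmult (pdiff s g) f c"
    by (simp only: sum_atMost_weighted_eq_pmult_pdiff)
  then show "pdiff s (pmult f g) c = (pmult (pdiff s f) g + pmult f (pdiff s g)) c"
    by (simp add: pmult_commute[of "pdiff s g"])
qed

lemma mon_fact_mult_pdiff:
  "mon_fact c * pdiff s f c = mon_fact (c + unit_mon s) * f (c + unit_mon s)"
  by (simp add: pdiff_def mon_fact_add_unit)

lemma pdiff_at_0: "pdiff s f 0 = mon_fact (unit_mon s) * f (unit_mon s)"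
  using mon_fact_mult_pdiff[of 0 s f] by simp

section \<open>The quartic coefficients of \<open>q\<^sup>2\<close>\<close>

definition quartic_tensor :: "'a::comm_semiring_1^'n^'n \<Rightarrow> 'n \<Rightarrow> 'n \<Rightarrow> 'n \<Rightarrow> 'n \<Rightarrow> 'a" where
  "quartic_tensor M s t u v = M$s$t * M$u$v + M$s$u * M$t$v + M$s$v * M$t$u"

lemma qmat_sym: "qmat q $ t $ s = qmat q $ s $ t"
  by (simp add: qmat_def add.commute eq_commute[of s t])

lemma transpose_qmat: "transpose (qmat q) = qmat q"
  by (simp add: transpose_def vec_eq_iff qmat_sym)

lemma mon_fact_mult_quadratic_coeff:
  "mon_fact (unit_mon s + unit_mon t) * q (unit_mon s + unit_mon t) = 2 * qmat q $ s $ t"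
proof -
  have "unit_mon s + unit_mon t = (\<lambda>k. (if k = s then 1 else 0) + (if k = t then 1 else 0))"
    by (simp add: unit_mon_def fun_eq_iff)
  moreover have "mon_fact (unit_mon s + unit_mon t) = (if s = t then 2 else 1)"
    by (simp add: mon_fact_add_unit mon_fact_unit_mon) (simp add: unit_mon_def)
  ultimately show ?thesis
    by (simp add: qmat_def)
qed

lemma mon_fact_mult_coeff_square:
  assumes "homog 2 q"
  shows "mon_fact (unit_mon s + unit_mon t + unit_mon u + unit_mon v)
      * pmult q q (unit_mon s + unit_mon t + unit_mon u + unit_mon v)
    = 8 * quartic_tensor (qmat q) s t u v"
proof -
  have vanish: "q a = 0" if "mdeg a \<noteq> 2" for a
    using assms that by (auto simp: homog_def)
  have "mon_fact (unit_mon s + unit_mon t + unit_mon u + unit_mon v)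
      * pmult q q (unit_mon s + unit_mon t + unit_mon u + unit_mon v)
    = pdiff s (pdiff t (pdiff u (pdiff v (pmult q q)))) 0"
    by (simp add: pdiff_at_0 mon_fact_mult_pdiff mult.assoc)
  \<comment> \<open>By Leibniz only the six terms differentiating each factor twice survive at \<open>0\<close>.\<close>
  also have "\<dots> = 8 * quartic_tensor (qmat q) s t u v"
    by (simp add: pdiff_pmult pdiff_add pmult_at_0 pdiff_at_0 mon_fact_mult_pdiff vanish
        mon_fact_mult_quadratic_coeff quartic_tensor_def algebra_simps
        qmat_sym[of q _ s] qmat_sym[of q v] qmat_sym[of q u t])
  finally show ?thesis .
qed

section \<open>Apolarity in matrix form\<close>

definition lincomb :: "'x set \<Rightarrow> ('x \<Rightarrow> complex) \<Rightarrow> ('x \<Rightarrow> mon) \<Rightarrow> poly4" where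
  "lincomb X c \<phi> = (\<lambda>a. sum c {x \<in> X. \<phi> x = a})"

lemma lincomb_support: "{a. lincomb X c \<phi> a \<noteq> 0} \<subseteq> \<phi> ` X"
proof
  fix a assume "a \<in> {a. lincomb X c \<phi> a \<noteq> 0}"
  then have "sum c {x \<in> X. \<phi> x = a} \<noteq> 0"
    by (simp add: lincomb_def)
  then obtain x where "x \<in> {x \<in> X. \<phi> x = a}"
    by (meson sum.not_neutral_contains_not_neutral)
  then show "a \<in> \<phi> ` X"
    by auto
qed

lemma is_poly_lincomb: "finite X \<Longrightarrow> is_poly (lincomb X c \<phi>)"
  unfolding is_poly_def by (rule finite_subset[OF lincomb_support]) simp

lemma homog_lincomb: "(\<And>x. x \<in> X \<Longrightarrow> mdeg (\<phi> x) = d) \<Longrightarrow> homog d (lincomb X c \<phi>)"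
  using lincomb_support[of X c \<phi>] by (auto simp: homog_def)

lemma sum_lincomb_mult:
  assumes "finite X"
  shows "(\<Sum>a\<in>\<phi> ` X. lincomb X c \<phi> a * F a) = (\<Sum>x\<in>X. c x * F (\<phi> x))"
proof -
  have "(\<Sum>x\<in>X. c x * F (\<phi> x)) = (\<Sum>a\<in>\<phi> ` X. \<Sum>x\<in>{x \<in> X. \<phi> x = a}. c x * F (\<phi> x))"
    using assms by (rule sum.image_gen)
  also have "\<dots> = (\<Sum>a\<in>\<phi> ` X. lincomb X c \<phi> a * F a)"
    by (rule sum.cong) (auto simp: lincomb_def sum_distrib_right)
  finally show ?thesis ..
qed

lemma peval_lincomb:
  assumes "finite X"
  shows "peval (lincomb X c \<phi>) v = (\<Sum>x\<in>X. c x * (\<Prod>i\<in>UNIV. v $ i ^ \<phi> x i))"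
proof -
  have "peval (lincomb X c \<phi>) v = (\<Sum>a\<in>\<phi> ` X. lincomb X c \<phi> a * (\<Prod>i\<in>UNIV. v $ i ^ a i))"
    unfolding peval_def
    by (rule sum.mono_neutral_left) (use assms lincomb_support[of X c \<phi>] in auto)
  then show ?thesis
    using assms by (simp add: sum_lincomb_mult)
qed

lemma papply_eq_sum:
  "papply g f d = (\<Sum>a | g a \<noteq> 0. g a * f (a + d) * (mon_fact (a + d) / mon_fact d))"
proof -
  have "(\<Prod>i\<in>UNIV. of_nat (fact (a i + d i)) / of_nat (fact (d i)))
      = mon_fact (a + d) / mon_fact d" for a
    by (simp add: mon_fact_def prod_dividef)
  then show ?thesis
    by (simp add: papply_def plus_fun_def)
qed

lemma papply_lincomb:
  assumes "finite X"
  shows "papply (lincomb X c \<phi>) f d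
    = (\<Sum>x\<in>X. c x * (mon_fact (\<phi> x + d) * f (\<phi> x + d)) / mon_fact d)"
proof -
  have "papply (lincomb X c \<phi>) f d
      = (\<Sum>a\<in>\<phi> ` X. lincomb X c \<phi> a * (f (a + d) * (mon_fact (a + d) / mon_fact d)))"
    unfolding papply_eq_sum mult.assoc
    by (rule sum.mono_neutral_left) (use assms lincomb_support[of X c \<phi>] in auto)
  also have "\<dots> = (\<Sum>x\<in>X. c x * (f (\<phi> x + d) * (mon_fact (\<phi> x + d) / mon_fact d)))"
    using assms by (rule sum_lincomb_mult)
  finally show ?thesis
    by (simp add: ac_simps)
qed

lemma homog_mem_ideal_of_points:
  assumes "is_poly g" and "homog d g" and "\<And>v. v \<in> G \<Longrightarrow> peval g v = 0"
  shows "g \<in> ideal_of_points G"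
proof -
  have "hcomp e g = (if e = d then g else (\<lambda>_. 0))" for e
    using assms(2) by (auto simp: hcomp_def homog_def fun_eq_iff)
  then show ?thesis
    using assms by (simp add: ideal_of_points_def peval_def)
qed

lemma sum_UNIV_prod:
  "(\<Sum>x\<in>UNIV. h x) = (\<Sum>a\<in>UNIV. \<Sum>b\<in>UNIV. h (a, b))"
  for h :: "'a::finite \<times> 'b::finite \<Rightarrow> 'c::comm_monoid_add"
  by (simp add: sum.cartesian_product)

definition dot :: "'a::comm_semiring_1^'n \<Rightarrow> 'a^'n \<Rightarrow> 'a" where
  "dot x y = (\<Sum>i\<in>UNIV. x $ i * y $ i)"

lemma dot_commute: "dot x y = dot y x"
  by (simp add: dot_def mult.commute)

lemma dot_zero_right [simp]: "dot x 0 = 0"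
  by (simp add: dot_def)

lemma dot_add_right: "dot x (y + z) = dot x y + dot x z"
  by (simp add: dot_def sum.distrib algebra_simps)

lemma dot_diff_left: "dot (x - y) z = dot x z - dot (y :: 'a::comm_ring_1^'n) z"
  by (simp add: dot_def sum_subtractf algebra_simps)

lemma dot_diff_right: "dot x (y - z) = dot x y - dot (x :: 'a::comm_ring_1^'n) z"
  by (simp add: dot_def sum_subtractf algebra_simps)

lemma dot_scale_left: "dot (c *s x) y = c * dot x y"
  by (simp add: dot_def sum_distrib_left algebra_simps)

lemma dot_scale_right: "dot x (c *s y) = c * dot x y"
  by (simp add: dot_def sum_distrib_left algebra_simps)

lemma dot_axis_left: "dot (axis i c) y = c * y $ i"
proof -
  have "dot (axis i c) y = (\<Sum>j\<in>UNIV. if j = i then c * y $ j else 0)"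
    unfolding dot_def axis_def by (rule sum.cong) auto
  then show ?thesis
    by simp
qed

lemma dot_axis_right: "dot x (axis i c) = x $ i * c"
  by (simp add: dot_commute[of x] dot_axis_left mult.commute)

lemma matrix_vector_mult_axis: "(A *v axis j 1) $ i = A $ i $ j"
  by (simp add: matrix_vector_mult_def axis_def if_distrib sum.If_cases cong del: if_weak_cong)

lemma dot_matrix_vector_mult: "dot x (B *v y) = (\<Sum>s\<in>UNIV. \<Sum>t\<in>UNIV. B $ s $ t * x $ s * y $ t)"
  by (simp add: dot_def matrix_vector_mult_def sum_distrib_left mult_ac)

lemma dot_vector_matrix_mult: "dot x (A *v y) = dot (x v* A) y"
  by (simp add: dot_def matrix_vector_mult_def vector_matrix_mult_def sum_distrib_left
      sum_distrib_right ac_simps)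
     (subst sum.swap, simp)

lemma dot_symmetric_matrix:
  "transpose A = A \<Longrightarrow> dot x (A *v y) = dot (A *v x) y"
  by (metis dot_vector_matrix_mult transpose_matrix_vector)

lemma dot_sum_matrix_vector_mult:
  "finite J \<Longrightarrow> dot x ((\<Sum>j\<in>J. A j) *v y) = (\<Sum>j\<in>J. dot x (A j *v y))"
  by (induction J rule: finite_induct) (simp_all add: matrix_vector_mult_add_rdistrib dot_add_right)

lemma matrix_vector_mult_scale: "A *v (c *s x) = c *s (A *v x)"
  for A :: "'a::comm_ring_1^'n^'m"
  by (simp add: vec_eq_iff matrix_vector_mult_def sum_distrib_left algebra_simps)

lemma trace_eq_sum_axis: "trace A = (\<Sum>i\<in>UNIV. (A *v axis i 1) $ i)"
  by (simp add: trace_def matrix_vector_mult_axis)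

text \<open>Up to the factor \<open>8\<close>, the action of the quadric \<open>y\<^sup>TBy\<close> on \<open>q\<^sup>2\<close>, as a matrix.\<close>

definition quartic_contract :: "'a::comm_semiring_1^'n^'n \<Rightarrow> 'a^'n^'n \<Rightarrow> 'a^'n^'n" where
  "quartic_contract M B = (\<chi> i k. \<Sum>s\<in>UNIV. \<Sum>t\<in>UNIV. B $ s $ t * quartic_tensor M s t i k)"

lemma quartic_tensor_rotate:
  "transpose M = M \<Longrightarrow> quartic_tensor M r s t u = quartic_tensor M s t u r"
  by (simp add: quartic_tensor_def transpose_def vec_eq_iff algebra_simps)

lemma apolar_quadric_imp_quartic_contract_eq_0:
  assumes hq: "homog 2 q" and ap: "apolar G (pmult q q)"
    and vanish: "\<And>v. v \<in> G \<Longrightarrow> dot v (B *v v) = 0"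
  shows "quartic_contract (qmat q) B = 0"
proof -
  define g where "g = lincomb UNIV (\<lambda>(s, t). B $ s $ t) (\<lambda>(s, t). unit_mon s + unit_mon t)"
  have "peval g v = dot v (B *v v)" for v
    by (simp add: g_def peval_lincomb sum_UNIV_prod power_add prod.distrib prod_power_unit_mon
        dot_matrix_vector_mult mult_ac)
  then have "g \<in> ideal_of_points G"
    by (intro homog_mem_ideal_of_points[where d = 2])
       (auto simp: g_def is_poly_lincomb vanish intro!: homog_lincomb split: prod.splits)
  then have "papply g (pmult q q) (unit_mon i + unit_mon k) = 0" for i k
    using ap by (simp add: apolar_def)
  moreover have "papply g (pmult q q) (unit_mon i + unit_mon k)
      = 8 * quartic_contract (qmat q) B $ i $ k / mon_fact (unit_mon i + unit_mon k)" for i k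
    by (simp add: g_def papply_lincomb sum_UNIV_prod add.assoc[symmetric] quartic_contract_def
        mon_fact_mult_coeff_square[OF hq] sum_divide_distrib sum_distrib_left mult_ac)
  moreover have "mon_fact a \<noteq> 0" for a
    by (simp add: mon_fact_def)
  ultimately show ?thesis
    by (simp add: vec_eq_iff)
qed

lemma apolar_cubic_imp_quartic_contract_mult_eq_0:
  assumes hq: "homog 2 q" and ap: "apolar G (pmult q q)"
    and vanish: "\<And>v. v \<in> G \<Longrightarrow> dot a v * dot v (B *v v) = 0"
  shows "quartic_contract (qmat q) B *v a = 0"
proof -
  define g where "g = lincomb UNIV (\<lambda>(r, s, t). a $ r * B $ s $ t)
    (\<lambda>(r, s, t). unit_mon r + unit_mon s + unit_mon t)"
  have "peval g v = (\<Sum>r\<in>UNIV. a $ r * v $ r * (\<Sum>s\<in>UNIV. \<Sum>t\<in>UNIV. B $ s $ t * v $ s * v $ t))" for v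
    by (simp add: g_def peval_lincomb sum_UNIV_prod power_add prod.distrib prod_power_unit_mon
        sum_distrib_left mult_ac)
  then have "peval g v = dot a v * dot v (B *v v)" for v
    unfolding dot_matrix_vector_mult by (simp add: dot_def sum_distrib_right)
  then have "g \<in> ideal_of_points G"
    by (intro homog_mem_ideal_of_points[where d = 3])
       (auto simp: g_def is_poly_lincomb vanish intro!: homog_lincomb split: prod.splits)
  then have "papply g (pmult q q) (unit_mon i) = 0" for i
    using ap by (simp add: apolar_def)
  moreover have "papply g (pmult q q) (unit_mon i) = 8 * (quartic_contract (qmat q) B *v a) $ i"
    for i
    by (simp add: g_def papply_lincomb sum_UNIV_prod mon_fact_unit_mon quartic_contract_def
        mon_fact_mult_coeff_square[OF hq] matrix_vector_mult_def
        quartic_tensor_rotate[OF transpose_qmat, of _ _ _ _ i]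
        sum_distrib_left sum_distrib_right mult_ac)
  ultimately show ?thesis
    by (simp add: vec_eq_iff)
qed

section \<open>Linear algebra of the contraction\<close>

lemma symmetric_annihilating_hyperplane:
  fixes P :: "'a::field^'n^'n"
  assumes "transpose P = P" and "p \<noteq> 0" and "\<And>a. dot a p = 0 \<Longrightarrow> P *v a = 0"
  shows "\<exists>\<nu>. \<forall>x. P *v x = (\<nu> * dot p x) *s p"
proof -
  obtain i0 where "p $ i0 \<noteq> 0"
    using assms(2) by (auto simp: vec_eq_iff)
  define z where "z = axis i0 (1 / p $ i0)"
  have "dot z p = 1"
    using \<open>p $ i0 \<noteq> 0\<close> by (simp add: z_def dot_axis_left)
  define w where "w = P *v z"
  have Pw: "P *v x = dot p x *s w" for x
  proof -
    have "dot (x - dot p x *s z) p = 0"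
      using \<open>dot z p = 1\<close> by (simp add: dot_diff_left dot_scale_left dot_commute[of x p])
    then have "P *v (x - dot p x *s z) = 0"
      by (rule assms(3))
    then show ?thesis
      by (simp add: matrix_vector_mult_diff_distrib matrix_vector_mult_scale w_def)
  qed
  have "P $ i $ j = p $ j * w $ i" for i j
    using Pw[of "axis j 1"]
    by (simp add: vec_eq_iff dot_commute[of p] dot_axis_left matrix_vector_mult_axis)
  then have "p $ i0 * w $ i = p $ i * w $ i0" for i
    using assms(1) by (metis transpose_def vec_lambda_beta)
  then have "w = (w $ i0 / p $ i0) *s p"
    using \<open>p $ i0 \<noteq> 0\<close> by (simp add: vec_eq_iff field_simps)
  then show ?thesis
    using Pw by (metis mult.commute vector_smult_assoc)
qed

lemma quartic_contract_entry:
  fixes M B :: "'a::comm_ring_1^'n^'n"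
  assumes "transpose M = M" and "transpose B = B"
  shows "quartic_contract M B $ i $ k = trace (B ** M) * M $ i $ k + 2 * (M ** B ** M) $ i $ k"
proof -
  have symM: "M $ t $ s = M $ s $ t" and symB: "B $ t $ s = B $ s $ t" for s t
    using assms by (metis transpose_def vec_lambda_beta)+
  have "trace (B ** M) = (\<Sum>s\<in>UNIV. \<Sum>t\<in>UNIV. B $ s $ t * M $ s $ t)"
    by (simp add: trace_def matrix_matrix_mult_def symM)
  moreover have "(M ** B ** M) $ i $ k = (\<Sum>s\<in>UNIV. \<Sum>t\<in>UNIV. B $ s $ t * M $ s $ i * M $ t $ k)"
    by (simp add: matrix_matrix_mult_def sum_distrib_left sum_distrib_right symM mult_ac)
       (subst sum.swap, simp add: mult_ac)
  moreover have "(\<Sum>s\<in>UNIV. \<Sum>t\<in>UNIV. B $ s $ t * M $ s $ k * M $ t $ i)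
      = (\<Sum>s\<in>UNIV. \<Sum>t\<in>UNIV. B $ s $ t * M $ s $ i * M $ t $ k)"
    by (subst sum.swap) (simp add: symB mult_ac)
  ultimately show ?thesis
    by (simp add: quartic_contract_def quartic_tensor_def sum.distrib distrib_left
        sum_distrib_left mult_ac)
qed

lemma transpose_quartic_contract:
  "transpose M = M \<Longrightarrow> transpose (quartic_contract M B) = quartic_contract M B"
  by (simp add: transpose_def quartic_contract_def quartic_tensor_def vec_eq_iff algebra_simps)

definition lies_on_no_quadric :: "('a::comm_semiring_1^'n) set \<Rightarrow> bool" where
  "lies_on_no_quadric G \<longleftrightarrow> (\<forall>B. transpose B = B \<longrightarrow> (\<forall>v\<in>G. dot v (B *v v) = 0) \<longrightarrow> B = 0)"

context
  fixes M N :: "'a::field_char_0^'n^'n"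
  assumes left_inverse: "N ** M = mat 1" and right_inverse: "M ** N = mat 1"
    and symmetric: "transpose M = M"
begin

lemma transpose_inverse: "transpose N = N"
proof -
  have "transpose N ** M = transpose (M ** N)"
    by (simp only: matrix_transpose_mul symmetric)
  then have "transpose N ** M = mat 1"
    by (simp add: right_inverse)
  then have "transpose N ** (M ** N) = N"
    by (simp add: matrix_mul_assoc)
  then show ?thesis
    by (simp add: right_inverse)
qed

lemma inverse_cancel: "N *v (M *v y) = y" "M *v (N *v y) = y"
  by (simp_all add: matrix_vector_mul_assoc left_inverse right_inverse)

lemma quartic_contract_rank_one_imp:
  assumes symB: "transpose B = B"
    and rank_one: "\<And>y. quartic_contract M B *v y = (\<nu> * dot p y) *s p"
  shows "\<exists>\<alpha>. (\<forall>x. B *v x = \<alpha> *s (N *v x) + (\<nu> / 2 * dot (N *v p) x) *s (N *v p))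
    \<and> of_nat (CARD('n) + 2) * \<alpha> = - (\<nu> / 2) * dot p (N *v p)"
proof -
  \<comment> \<open>The contraction determines \<open>C = MBM\<close>, hence \<open>B = NCN\<close>; the trace of \<open>BM\<close> then
    ties \<open>\<alpha>\<close> to \<open>\<nu>\<close>.\<close>
  define \<tau> where "\<tau> = trace (B ** M)"
  define \<alpha> where "\<alpha> = - \<tau> / 2"
  define C where "C = M ** B ** M"
  have "quartic_contract M B *v y = \<tau> *s (M *v y) + 2 *s (C *v y)" for y
    by (simp add: vec_eq_iff matrix_vector_mult_def quartic_contract_entry[OF symmetric symB]
        \<tau>_def C_def sum.distrib sum_distrib_left algebra_simps)
  then have C: "C *v y = (\<nu> / 2 * dot p y) *s p + \<alpha> *s (M *v y)" for y
    using rank_one[of y] by (auto simp: \<alpha>_def vec_eq_iff field_simps)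
  have B: "B *v x = \<alpha> *s (N *v x) + (\<nu> / 2 * dot (N *v p) x) *s (N *v p)" for x
  proof -
    have "B = N ** C ** N"
      by (simp add: C_def matrix_mul_assoc left_inverse)
         (simp add: matrix_mul_assoc[symmetric] right_inverse)
    then have "B *v x = N *v (C *v (N *v x))"
      by (simp add: matrix_vector_mul_assoc[symmetric])
    also have "\<dots> = \<alpha> *s (N *v x) + (\<nu> / 2 * dot (N *v p) x) *s (N *v p)"
      by (simp add: C matrix_vector_right_distrib matrix_vector_mult_scale inverse_cancel
          dot_symmetric_matrix[OF transpose_inverse] add.commute)
    finally show ?thesis .
  qed
  have BM: "(B ** M) *v y = \<alpha> *s y + (\<nu> / 2 * dot p y) *s (N *v p)" for y
  proof -
    have "dot (N *v p) (M *v y) = dot p y"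
      by (simp add: dot_symmetric_matrix[OF symmetric] inverse_cancel)
    then show ?thesis
      by (simp add: matrix_vector_mul_assoc[symmetric] B inverse_cancel)
  qed
  have "\<tau> = of_nat CARD('n) * \<alpha> + \<nu> / 2 * dot p (N *v p)"
    by (simp add: \<tau>_def trace_eq_sum_axis BM sum.distrib dot_axis_right)
       (simp add: dot_def sum_distrib_left mult_ac)
  then have "of_nat (CARD('n) + 2) * \<alpha> = - (\<nu> / 2) * dot p (N *v p)"
    by (simp add: \<alpha>_def field_simps)
  with B show ?thesis
    by blast
qed

lemma quartic_contract_eq_0_imp:
  assumes "transpose B = B" and "quartic_contract M B = 0"
  shows "B = 0"
proof -
  obtain \<alpha> where B: "\<And>x. B *v x = \<alpha> *s (N *v x)" and "of_nat (CARD('n) + 2) * \<alpha> = 0"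
    using quartic_contract_rank_one_imp[OF assms(1), of 0 0] assms(2) by auto
  then have "\<alpha> = 0"
    by (simp only: mult_eq_0_iff of_nat_eq_0_iff) simp
  with B show ?thesis
    by (simp add: matrix_eq)
qed

lemma quartic_contract_annihilates_hyperplane_imp:
  assumes "transpose B = B" and "p \<noteq> 0"
    and "\<And>a. dot a p = 0 \<Longrightarrow> quartic_contract M B *v a = 0"
  shows "\<exists>\<alpha> \<mu>. (\<forall>x. B *v x = \<alpha> *s (N *v x) + (\<mu> * dot (N *v p) x) *s (N *v p))
    \<and> of_nat (CARD('n) + 2) * \<alpha> = - \<mu> * dot p (N *v p)"
proof -
  obtain \<nu> where "\<And>y. quartic_contract M B *v y = (\<nu> * dot p y) *s p"
    using symmetric_annihilating_hyperplane[OF transpose_quartic_contract[OF symmetric] assms(2,3)]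
    by blast
  from quartic_contract_rank_one_imp[OF assms(1) this] show ?thesis
    by blast
qed

lemma gram_relations_at_point:
  assumes no_quadric: "lies_on_no_quadric G"
    and apolar_cubic: "\<And>a B. transpose B = B \<Longrightarrow> (\<forall>v\<in>G. dot a v * dot v (B *v v) = 0)
      \<Longrightarrow> quartic_contract M B *v a = 0"
    and "p \<in> G" and "p \<noteq> 0"
    and symB: "transpose B = B" and "B \<noteq> 0" and vanish: "\<forall>v\<in>G - {p}. dot v (B *v v) = 0"
  shows "dot p (N *v p) \<noteq> 0"
    and "\<And>k. k \<in> G - {p}
      \<Longrightarrow> of_nat (CARD('n) + 2) * dot k (N *v p)^2 = dot p (N *v p) * dot k (N *v k)"
proof -
  have "dot p (B *v p) \<noteq> 0"
    using no_quadric symB \<open>B \<noteq> 0\<close> vanish by (auto simp: lies_on_no_quadric_def)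
  have "quartic_contract M B *v a = 0" if "dot a p = 0" for a
  proof (intro apolar_cubic[OF symB] ballI)
    fix v assume "v \<in> G"
    then show "dot a v * dot v (B *v v) = 0"
      using vanish that by (cases "v = p") auto
  qed
  then obtain \<alpha> \<mu> where B: "\<And>x. B *v x = \<alpha> *s (N *v x) + (\<mu> * dot (N *v p) x) *s (N *v p)"
    and trace: "of_nat (CARD('n) + 2) * \<alpha> = - \<mu> * dot p (N *v p)"
    using quartic_contract_annihilates_hyperplane_imp[OF symB \<open>p \<noteq> 0\<close>]
    by blast
  define d :: 'a where "d = of_nat (CARD('n) + 2)"
  have "d \<noteq> 0"
    by (simp only: d_def of_nat_eq_0_iff)
  have quad: "d * dot v (B *v v) = \<mu> * (d * dot v (N *v p)^2 - dot p (N *v p) * dot v (N *v v))"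
    for v
  proof -
    have "d * dot v (B *v v) = (d * \<alpha>) * dot v (N *v v) + d * \<mu> * dot v (N *v p)^2"
      by (simp add: B dot_add_right dot_scale_right dot_commute[of "N *v p"] power2_eq_square
          algebra_simps)
    also have "\<dots> = \<mu> * (d * dot v (N *v p)^2 - dot p (N *v p) * dot v (N *v v))"
      by (simp only: trace[folded d_def]) (simp add: algebra_simps)
    finally show ?thesis .
  qed
  have "d * dot p (B *v p) \<noteq> 0"
    using \<open>d \<noteq> 0\<close> \<open>dot p (B *v p) \<noteq> 0\<close> by simp
  with quad[of p] have "\<mu> \<noteq> 0" and np: "dot p (N *v p) \<noteq> 0"
    by auto
  show "dot p (N *v p) \<noteq> 0"
    by (fact np)
  fix k assume "k \<in> G - {p}"
  with vanish quad[of k] \<open>\<mu> \<noteq> 0\<close>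
  show "of_nat (CARD('n) + 2) * dot k (N *v p)^2 = dot p (N *v p) * dot k (N *v k)"
    by (simp add: d_def)
qed

end

section \<open>Ten points in \<open>\<P>\<^sup>3\<close>\<close>

lemma exists_nonzero_orthogonal:
  fixes W :: "('a::field^'n) set"
  assumes "finite W" and "card W < CARD('n)"
  shows "\<exists>x. x \<noteq> 0 \<and> (\<forall>w\<in>W. dot w x = 0)"
proof -
  obtain f :: "'a^'n \<Rightarrow> 'n" where f: "inj_on f W"
    using card_le_inj[of W "UNIV :: 'n set"] assms by auto
  define A :: "'a^'n^'n" where "A = (\<chi> i. if i \<in> f ` W then the_inv_into W f i else 0)"
  have row: "A $ f w = w" if "w \<in> W" for w
    using that f by (simp add: A_def the_inv_into_f_f)
  have "rows A \<subseteq> insert 0 W"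
  proof
    fix r assume "r \<in> rows A"
    then obtain i where "r = A $ i"
      by (auto simp: rows_def row_def)
    then show "r \<in> insert 0 W"
      using f by (auto simp: A_def the_inv_into_into)
  qed
  then have "vec.span (rows A) \<subseteq> vec.span W"
    by (metis vec.span_insert_0 vec.span_mono)
  then have "\<not> vec.span (rows A) = UNIV"
    using vec.dim_le_card[OF _ assms(1)] assms(2) vec_dim_card[where 'a = 'a and 'n = 'n]
    by (metis not_le)
  then obtain x where "A *v x = 0" and "x \<noteq> 0"
    using matrix_left_invertible_ker[of A] matrix_left_invertible_span_rows_gen[of A] by blast
  moreover have "dot w x = (A *v x) $ f w" if "w \<in> W" for w
    using that by (simp add: matrix_vector_mult_def dot_def row)
  ultimately show ?thesis
    by auto
qed

lemma exists_quadric_through: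
  fixes P :: "('a::field^4) set"
  assumes "finite P" and "card P < 10"
  shows "\<exists>B. transpose B = B \<and> B \<noteq> 0 \<and> (\<forall>v\<in>P. dot v (B *v v) = 0)"
proof -
  define square :: "'a^4 \<Rightarrow> 'a^(4 \<times> 4)" where
    "square v = (\<chi> st. v $ fst st * v $ snd st)" for v
  define skew :: "4 \<times> 4 \<Rightarrow> 'a^(4 \<times> 4)" where
    "skew st = axis st 1 - axis (snd st, fst st) 1" for st
  define pairs :: "(4 \<times> 4) list" where "pairs = [(1,2), (1,3), (1,4), (2,3), (2,4), (3,4)]"
  \<comment> \<open>\<open>9 + 6 < 16\<close> linear conditions; orthogonality to the skew vectors makes \<open>x\<close> symmetric.\<close>
  define W where "W = square ` P \<union> skew ` set pairs"
  have "card W \<le> card P + length pairs"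
    unfolding W_def
    by (metis card_Un_le card_image_le card_length List.finite_set assms(1) add_mono le_trans)
  then have card: "card W < CARD(4 \<times> 4)"
    using assms(2) by (simp add: pairs_def)
  have "finite W"
    using assms(1) by (simp add: W_def)
  then obtain x where "x \<noteq> 0" and x: "\<And>w. w \<in> W \<Longrightarrow> dot w x = 0"
    using exists_nonzero_orthogonal[OF _ card] by blast
  define B :: "'a^4^4" where "B = (\<chi> s t. x $ (s, t))"
  have skew_pairs: "x $ (s, t) = x $ (t, s)" if "(s, t) \<in> set pairs" for s t
  proof -
    have "dot (skew (s, t)) x = 0"
      using that by (intro x) (simp add: W_def)
    then show ?thesis
      by (simp add: skew_def dot_diff_left dot_axis_left)
  qed
  have "\<forall>s t. x $ (s, t) = x $ (t, s)"
    unfolding forall_4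
    using skew_pairs[of 1 2] skew_pairs[of 1 3] skew_pairs[of 1 4] skew_pairs[of 2 3]
      skew_pairs[of 2 4] skew_pairs[of 3 4]
    by (simp add: pairs_def)
  then have "transpose B = B"
    by (simp add: B_def transpose_def vec_eq_iff)
  moreover have "B \<noteq> 0"
  proof
    assume "B = 0"
    have "x $ (s, t) = B $ s $ t" for s t
      by (simp add: B_def)
    with \<open>B = 0\<close> have "x $ st = 0" for st
      by (cases st) simp
    with \<open>x \<noteq> 0\<close> show False
      by (simp add: vec_eq_iff)
  qed
  moreover have "dot v (B *v v) = dot (square v) x" for v
    unfolding dot_matrix_vector_mult by (simp add: B_def square_def dot_def sum_UNIV_prod mult_ac)
  then have "\<forall>v\<in>P. dot v (B *v v) = 0"
    using x by (simp add: W_def)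
  ultimately show ?thesis
    by blast
qed

lemma interpolation_identity:
  fixes G :: "('a::field_char_0^'n) set" and N :: "'a^'n^'n"
  assumes "transpose N = N" and "finite G" and "lies_on_no_quadric G"
    and nonzero: "\<And>p. p \<in> G \<Longrightarrow> dot p (N *v p) \<noteq> 0"
    and relation: "\<And>p k. p \<in> G \<Longrightarrow> k \<in> G \<Longrightarrow> k \<noteq> p
      \<Longrightarrow> 6 * dot k (N *v p)^2 = dot p (N *v p) * dot k (N *v k)"
  shows "dot x (N *v y) = (\<Sum>j\<in>G. 6 / (5 * dot j (N *v j))
    * (dot x (N *v j) * dot y (N *v j) - dot j (N *v j) / 6 * dot x (N *v y)))"
proof -
  \<comment> \<open>\<open>X\<close> is \<open>N\<close> minus its interpolation by the rank-one forms; it vanishes on \<open>G\<close>.\<close>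
  define c where "c j = 6 / (5 * dot j (N *v j))" for j
  define X where "X = N - (\<Sum>j\<in>G. \<chi> s t.
    c j * ((N *v j) $ s * (N *v j) $ t - dot j (N *v j) / 6 * N $ s $ t))"
  have summand: "dot x ((\<chi> s t. a * (u $ s * u $ t - e * N $ s $ t)) *v y)
      = a * (dot x u * dot y u - e * dot x (N *v y))" for x y u a e
    unfolding dot_matrix_vector_mult
    by (simp add: dot_def sum_product sum_subtractf sum_distrib_left algebra_simps)
       (subst sum.swap, simp add: mult_ac)
  have dotX: "dot x (X *v y) = dot x (N *v y) - (\<Sum>j\<in>G. c j
      * (dot x (N *v j) * dot y (N *v j) - dot j (N *v j) / 6 * dot x (N *v y)))" for x y
    by (simp only: X_def matrix_vector_mult_diff_rdistrib dot_diff_right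
        dot_sum_matrix_vector_mult[OF assms(2)] summand)
  have "transpose X = X"
    using assms(1) by (simp add: X_def transpose_def vec_eq_iff mult.commute)
  moreover have "dot v (X *v v) = 0" if "v \<in> G" for v
  proof -
    have "(\<Sum>j\<in>G - {v}.
        c j * (dot v (N *v j) * dot v (N *v j) - dot j (N *v j) / 6 * dot v (N *v v))) = 0"
    proof (intro sum.neutral ballI)
      fix j assume "j \<in> G - {v}"
      then have "6 * dot v (N *v j)^2 = dot j (N *v j) * dot v (N *v v)"
        using relation[of j v] \<open>v \<in> G\<close> by auto
      then have "dot v (N *v j) * dot v (N *v j) = dot j (N *v j) / 6 * dot v (N *v v)"
        by (simp add: power2_eq_square field_simps)
      then show "c j * (dot v (N *v j) * dot v (N *v j) - dot j (N *v j) / 6 * dot v (N *v v)) = 0"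
        by simp
    qed
    moreover have "c v * (dot v (N *v v) * dot v (N *v v) - dot v (N *v v) / 6 * dot v (N *v v))
        = dot v (N *v v)"
      using nonzero[OF that] by (simp add: c_def field_simps)
    ultimately show ?thesis
      by (simp add: dotX sum.remove[OF assms(2) that])
  qed
  ultimately have "X = 0"
    using assms(3) by (auto simp: lies_on_no_quadric_def)
  then show ?thesis
    using dotX[of x y] by (simp add: c_def)
qed

lemma sum_eq_of_int_mult_if_squares_eq:
  fixes \<zeta> :: "'j \<Rightarrow> 'a::idom"
  assumes "finite R" and "\<And>j. j \<in> R \<Longrightarrow> \<zeta> j ^ 2 = z ^ 2"
  shows "\<exists>m::int. sum \<zeta> R = of_int m * z"
  using assms
proof (induction R rule: finite_induct)
  case empty
  show ?case
    by (rule exI[of _ 0]) simp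
next
  case (insert a R)
  then obtain m where m: "sum \<zeta> R = of_int m * z"
    by blast
  from insert.prems have "\<zeta> a = z \<or> \<zeta> a = - z"
    by (simp add: power2_eq_iff)
  then show ?case
  proof
    assume "\<zeta> a = z"
    then show ?case
      using insert.hyps m by (intro exI[of _ "m + 1"]) (simp add: algebra_simps)
  next
    assume "\<zeta> a = - z"
    then show ?case
      using insert.hyps m by (intro exI[of _ "m - 1"]) (simp add: algebra_simps)
  qed
qed

lemma interpolation_at_two_points:
  fixes G :: "('a::field_char_0^'n) set" and N :: "'a^'n^'n"
  assumes symN: "transpose N = N" and "finite G" and "card G = 10" and "lies_on_no_quadric G"
    and nonzero: "\<And>p. p \<in> G \<Longrightarrow> dot p (N *v p) \<noteq> 0"
    and relation: "\<And>p k. p \<in> G \<Longrightarrow> k \<in> G \<Longrightarrow> k \<noteq> p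
      \<Longrightarrow> 6 * dot k (N *v p)^2 = dot p (N *v p) * dot k (N *v k)"
    and k: "k \<in> G" and l: "l \<in> G" and "k \<noteq> l"
  shows "(\<Sum>j\<in>G - {k} - {l}. 6 / (5 * dot j (N *v j)) * dot k (N *v j) * dot l (N *v j))
    = 3 / 5 * dot k (N *v l)"
proof -
  define n where "n j = dot j (N *v j)" for j
  define c where "c j = 6 / (5 * n j)" for j
  define g where "g = dot k (N *v l)"
  define S where "S j = c j * dot k (N *v j) * dot l (N *v j)" for j
  have cn: "c j * n j = 6 / 5" if "j \<in> G" for j
    using nonzero[OF that] by (simp add: c_def n_def)
  have "g = (\<Sum>j\<in>G. c j * (dot k (N *v j) * dot l (N *v j) - n j / 6 * g))"
    using interpolation_identity[OF symN \<open>finite G\<close> \<open>lies_on_no_quadric G\<close> nonzero relation, of k l]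
    by (simp add: g_def c_def n_def)
  also have "\<dots> = (\<Sum>j\<in>G. S j - g / 5)"
  proof (rule sum.cong)
    fix j assume "j \<in> G"
    have "c j * (dot k (N *v j) * dot l (N *v j) - n j / 6 * g) = S j - (c j * n j) * g / 6"
      by (simp add: S_def algebra_simps)
    then show "c j * (dot k (N *v j) * dot l (N *v j) - n j / 6 * g) = S j - g / 5"
      by (simp add: cn[OF \<open>j \<in> G\<close>])
  qed simp
  also have "\<dots> = sum S G - 2 * g"
    by (simp add: sum_subtractf \<open>card G = 10\<close>)
  finally have "sum S G = 3 * g"
    by simp
  moreover have "sum S G = S k + S l + sum S (G - {k} - {l})"
    using \<open>finite G\<close> k l \<open>k \<noteq> l\<close> by (simp add: sum.remove[of G k] sum.remove[of "G - {k}" l])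
  moreover have "dot l (N *v k) = g"
    using dot_symmetric_matrix[OF symN, of l k] by (simp add: g_def dot_commute)
  then have "S k = 6 / 5 * g" and "S l = 6 / 5 * g"
    using cn[OF k] cn[OF l] by (simp_all add: S_def g_def n_def mult_ac)
  ultimately have "sum S (G - {k} - {l}) = 3 / 5 * g"
    by (simp add: field_simps)
  then show ?thesis
    by (simp add: S_def c_def n_def g_def)
qed

lemma no_ten_points_with_gram_relations:
  fixes G :: "('a::field_char_0^'n) set" and N :: "'a^'n^'n"
  assumes symN: "transpose N = N" and "finite G" and "card G = 10" and "lies_on_no_quadric G"
    and nonzero: "\<And>p. p \<in> G \<Longrightarrow> dot p (N *v p) \<noteq> 0"
    and relation: "\<And>p k. p \<in> G \<Longrightarrow> k \<in> G \<Longrightarrow> k \<noteq> p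
      \<Longrightarrow> 6 * dot k (N *v p)^2 = dot p (N *v p) * dot k (N *v k)"
  shows False
proof -
  have "\<not> card G \<le> Suc 0"
    using \<open>card G = 10\<close> by simp
  then obtain k l where k: "k \<in> G" and l: "l \<in> G" and "k \<noteq> l"
    using card_le_Suc0_iff_eq[OF \<open>finite G\<close>] by blast
  define n where "n j = dot j (N *v j)" for j
  define g where "g = dot k (N *v l)"
  define R where "R = G - {k} - {l}"
  have g2: "g^2 = n l * n k / 6"
    using relation[OF l k \<open>k \<noteq> l\<close>] by (simp add: g_def n_def field_simps)
  then have "g \<noteq> 0"
    using nonzero[OF k] nonzero[OF l] by (auto simp: n_def)
  \<comment> \<open>The eight numbers \<open>\<zeta> j\<close> are \<open>\<plusminus>\<surd>6/5\<close> but sum to \<open>3/5\<close>.\<close>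
  define \<zeta> where "\<zeta> j = 6 / (5 * n j) * dot k (N *v j) * dot l (N *v j) / g" for j
  have "sum \<zeta> R = (\<Sum>j\<in>R. 6 / (5 * n j) * dot k (N *v j) * dot l (N *v j)) / g"
    by (simp add: \<zeta>_def sum_divide_distrib)
  also have "\<dots> = 3 / 5"
    using interpolation_at_two_points[OF assms k l \<open>k \<noteq> l\<close>] \<open>g \<noteq> 0\<close>
    by (simp add: R_def n_def g_def)
  finally have "sum \<zeta> R = 3 / 5" .
  have squares: "\<zeta> j ^ 2 = 6 / 25" if "j \<in> R" for j
  proof -
    have jk: "dot k (N *v j)^2 = n j * n k / 6" and jl: "dot l (N *v j)^2 = n j * n l / 6"
      using relation[of j k] relation[of j l] that k l by (auto simp: R_def n_def field_simps)
    have "\<zeta> j ^ 2 = (6 / (5 * n j))^2 * (n j * n k / 6) * (n j * n l / 6) / (n l * n k / 6)"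
      by (simp add: \<zeta>_def power_divide power_mult_distrib g2 jk jl)
    then show ?thesis
      using nonzero[of j] nonzero[OF k] nonzero[OF l] that
      by (simp add: R_def n_def field_simps power2_eq_square)
  qed
  have "card R = 8"
    using \<open>card G = 10\<close> k l \<open>k \<noteq> l\<close> by (simp add: R_def card_Diff_singleton)
  then have "R \<noteq> {}"
    by auto
  then obtain j0 where "j0 \<in> R"
    by blast
  have "finite R"
    using \<open>finite G\<close> by (simp add: R_def)
  then obtain m :: int where "sum \<zeta> R = of_int m * \<zeta> j0"
    using sum_eq_of_int_mult_if_squares_eq[of R \<zeta> "\<zeta> j0"] squares \<open>j0 \<in> R\<close> by auto
  then have "(3 / 5) ^ 2 = of_int m ^ 2 * \<zeta> j0 ^ 2"
    using \<open>sum \<zeta> R = 3 / 5\<close> by (metis power_mult_distrib)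
  then have "(9 :: 'a) = of_int (6 * m^2)"
    using squares[OF \<open>j0 \<in> R\<close>] by (simp add: field_simps)
  then have "(9 :: int) = 6 * m^2"
    by (metis of_int_eq_iff of_int_numeral)
  then show False
    by presburger
qed

lemma full_rank_imp_invertible:
  fixes M :: "'a::field^'n^'n"
  assumes "rank M = CARD('n)"
  shows "invertible M"
proof -
  have "vec.dim (rows M) = vec.dimension TYPE('a) TYPE('n)"
    using assms by (simp add: row_rank_def_gen vec.dimension_def card_cart_basis)
  then have "vec.span (rows M) = UNIV"
    by (simp add: vec.dim_eq_full)
  then show ?thesis
    by (simp add: invertible_left_inverse matrix_left_invertible_span_rows_gen)
qed

theorem lemma4p15:
  fixes q :: poly4
  assumes "is_poly q" and "homog 2 q" and "rank (qmat q) = 4"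
  shows "\<not> (\<exists>G. finite G \<and> card G = 10 \<and> proj_points G \<and> apolar G (pmult q q))"
proof
  assume "\<exists>G. finite G \<and> card G = 10 \<and> proj_points G \<and> apolar G (pmult q q)"
  then obtain G where "finite G" and "card G = 10" and "proj_points G"
    and ap: "apolar G (pmult q q)"
    by blast
  obtain N where NM: "N ** qmat q = mat 1" and MN: "qmat q ** N = mat 1"
    using full_rank_imp_invertible[of "qmat q"] assms(3) by (auto simp: invertible_def)
  note inverse_pair = NM MN transpose_qmat
  have no_quadric: "lies_on_no_quadric G"
    unfolding lies_on_no_quadric_def
    using quartic_contract_eq_0_imp[OF inverse_pair]
      apolar_quadric_imp_quartic_contract_eq_0[OF assms(2) ap]
    by blast
  have "dot p (N *v p) \<noteq> 0 \<and> (\<forall>k\<in>G - {p}. 6 * dot k (N *v p)^2 = dot p (N *v p) * dot k (N *v k))"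
    if "p \<in> G" for p
  proof -
    have "p \<noteq> 0"
      using \<open>proj_points G\<close> that by (simp add: proj_points_def)
    have "card (G - {p}) < 10"
      using \<open>card G = 10\<close> that by (simp add: card_Diff_singleton)
    then obtain B where "transpose B = B" "B \<noteq> 0" "\<forall>v\<in>G - {p}. dot v (B *v v) = 0"
      using exists_quadric_through[of "G - {p}"] \<open>finite G\<close> by auto
    from gram_relations_at_point[OF inverse_pair no_quadric
        apolar_cubic_imp_quartic_contract_mult_eq_0[OF assms(2) ap] that \<open>p \<noteq> 0\<close> this]
    show ?thesis
      by simp
  qed
  then show False
    using no_ten_points_with_gram_relations[OF transpose_inverse[OF inverse_pair] \<open>finite G\<close>
        \<open>card G = 10\<close> no_quadric]
    by blast
qed

end
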